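(* In the quantized ARX setting described in the context, suppose Assumptions (A1) and (A2) hold. Then there is a constant $c_4>0$ such that, almost surely, $\lambda^{(p^*,q_0)}_{max}(n)\le c_4(n+1)$ for all sufficiently large $n$, where $\lambda^{(p^*,q_0)}_{max}(n)$ is the largest eigenvalue of $\sum_{i=0}^n\psi_i(p^*,q_0)\psi_i(p^*,q_0)^\top+I$.
   Context: System: $y_{n+1}=-a_1y_n-\dots-a_{p_0}y_{n-p_0+1}+b_1u_n+\dots+b_{q_0}u_{n-q_0+1}+w_{n+1}$, $n\ge0$, i.e. $A(z)y_{n+1}=B(z)u_n+w_{n+1}$ with $A(z)=1+a_1z+\dots+a_{p_0}z^{p_0}$ ($p_0\ge0$), $B(z)=b_1+\dots+b_{q_0}z^{q_0-1}$ ($q_0\ge1$), $z$ the backward shift, $a_{p_0}\ne0$, $b_{q_0}\ne0$. Noise $\{w_n\}$ i.i.d. $N(0,1)$; $y_n=u_n=w_n=0$ for $n<0$. With quantization step $\varepsilon>0$, $s_n=\varepsilon\lfloor y_n/\varepsilon+1/2\rfloor$. For integers $p,q\ge0$, $\psi_i(p,q)=[s_i,\dots,s_{i-p+1},u_i,\dots,u_{i-q+1}]^\top$ with $s_i=u_i=0$ when $i\le0$. $p^*>0$ is a fixed integer (known upper bound for $p_0$). (A1) $\{u_i\}$ i.i.d., uniform on $[-\delta,\delta]$, $\delta>0$. (A2) $A(z)\ne0$ for all $|z|\le1$. *)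

theory Defs
  imports "HOL-Probability.Probability" "Jordan_Normal_Form.Char_Poly"
begin

definition quant :: "real \<Rightarrow> real \<Rightarrow> real" where
  "quant eps v = eps * real_of_int \<lfloor>v / eps + 1/2\<rfloor>"

text \<open>Regressor psi_i(p,q) = [s_i,...,s_{i-p+1}, u_i,...,u_{i-q+1}], as a nat-indexed
  vector of length p+q, with s_j = u_j = 0 for j <= 0.\<close>
definition psi :: "(nat \<Rightarrow> real) \<Rightarrow> (nat \<Rightarrow> real) \<Rightarrow> nat \<Rightarrow> nat \<Rightarrow> nat \<Rightarrow> nat \<Rightarrow> real" where
  "psi s u p q i k =
     (if k < p then (if k < i then s (i - k) else 0)
      else if k < p + q then (if k - p < i then u (i - (k - p)) else 0)
      else 0)"

definition info_mat :: "(nat \<Rightarrow> real) \<Rightarrow> (nat \<Rightarrow> real) \<Rightarrow> nat \<Rightarrow> nat \<Rightarrow> nat \<Rightarrow> real mat" where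
  "info_mat s u p q n = mat (p + q) (p + q)
     (\<lambda>(k, l). (\<Sum>i = 0..n. psi s u p q i k * psi s u p q i l) + (if k = l then 1 else 0))"

definition lambda_max :: "real mat \<Rightarrow> real" where
  "lambda_max A = Max {k. eigenvalue A k}"

end

theory Submission
  imports Defs "HOL-Complex_Analysis.Complex_Analysis"
begin

text \<open>
  The largest eigenvalue of the positive semidefinite matrix \<open>\<Sum> \<psi>\<^sub>i \<psi>\<^sub>i\<^sup>T + I\<close> is at most
  its trace, \<open>1 + \<Sum>\<^sub>i |\<psi>\<^sub>i|\<^sup>2\<close>, so it suffices to bound the energies of the regressor
  components linearly in \<open>n\<close>. Quantization costs only \<open>s\<^sub>i\<^sup>2 \<le> 2 y\<^sub>i\<^sup>2 + \<epsilon>\<^sup>2\<close>, and the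
  inputs are bounded by \<open>\<delta>\<close>. For the outputs, \<open>A(z) y = B(z) u + w\<close> and stability of \<open>A\<close>
  makes the coefficients of \<open>1/A(z)\<close> absolutely summable, so by Young's inequality the
  energy of \<open>y\<close> is at most a constant times that of \<open>B(z) u + w\<close>. Finally a Chernoff bound
  with \<open>E exp(w\<^sup>2/4) = \<surd>2 < e\<close> and Borel-Cantelli give \<open>\<Sum>\<^sub>k\<^sub><\<^sub>m w\<^sub>k\<^sup>2 \<le> 4m\<close> eventually,
  almost surely.
\<close>

subsection \<open>Stable autoregressive filters\<close>

lemma has_fps_expansion_poly: "poly P has_fps_expansion fps_of_poly P"
  unfolding has_fps_expansion_def by simp

lemma summable_norm_fps_inverse_poly:
  fixes P :: "complex poly"
  assumes no_roots: "\<And>z. norm z \<le> 1 \<Longrightarrow> poly P z \<noteq> 0"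
  shows "summable (\<lambda>n. norm (fps_nth (inverse (fps_of_poly P)) n))"
proof -
  have "P \<noteq> 0" using no_roots[of 0] by auto
  define R where "R = {z. poly P z = 0}"
  have finR: "finite R" unfolding R_def using poly_roots_finite[OF \<open>P \<noteq> 0\<close>] .
  have R_outside: "z \<in> R \<Longrightarrow> norm z > 1" for z
    using no_roots[of z] unfolding R_def by force
  define r where "r = (if R = {} then 2 else Min (norm ` R))"
  have "r > 1" using finR R_outside unfolding r_def by auto
  have "poly P z \<noteq> 0" if "norm z < r" for z
    using that finR unfolding r_def R_def by (auto split: if_splits)
  then have "(\<lambda>z. inverse (poly P z)) holomorphic_on eball 0 (ereal r)"
    by (intro holomorphic_intros) auto
  moreover have "(\<lambda>z. inverse (poly P z)) has_fps_expansion inverse (fps_of_poly P)"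
    using no_roots[of 0] by (intro has_fps_expansion_inverse has_fps_expansion_poly) (simp add: poly_0_coeff_0)
  ultimately have "fps_conv_radius (inverse (fps_of_poly P)) \<ge> ereal r"
    by (rule holomorphic_on_imp_fps_conv_radius_ge[rotated])
  then have "ereal (norm (1::complex)) < conv_radius (fps_nth (inverse (fps_of_poly P)))"
    using \<open>r > 1\<close> by (simp add: fps_conv_radius_def) (meson ereal_less(2) order.strict_trans2 ereal_less_eq(3) less_ereal.simps(1))
  from abs_summable_in_conv_radius[OF this] show ?thesis by simp
qed

lemma sum_shifted_le:
  fixes f :: "nat \<Rightarrow> real"
  assumes "\<And>k. f k \<ge> 0"
  shows "(\<Sum>n\<le>N. if i \<le> n then f (n - i) else 0) \<le> (\<Sum>k\<le>N. f k)"
proof (cases "i \<le> N")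
  case True
  have "(\<Sum>n\<le>N. if i \<le> n then f (n - i) else 0) = (\<Sum>n\<in>{i..N}. f (n - i))"
    by (rule sum.mono_neutral_cong_right) auto
  also have "\<dots> = (\<Sum>k\<in>{0..N-i}. f k)"
    using sum.shift_bounds_cl_nat_ivl[of "\<lambda>n. f (n - i)" 0 i "N-i"] True by simp
  also have "\<dots> \<le> (\<Sum>k\<le>N. f k)"
    by (rule sum_mono2) (auto simp: assms)
  finally show ?thesis .
next
  case False
  then have "(\<Sum>n\<le>N. if i \<le> n then f (n - i) else 0) = 0" by (intro sum.neutral) auto
  then show ?thesis by (simp add: sum_nonneg assms)
qed

lemma sum_square_convolution_le:
  fixes c g :: "nat \<Rightarrow> real"
  assumes c_nonneg: "\<And>n. c n \<ge> 0" and "summable c"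
  shows "(\<Sum>n\<le>N. (\<Sum>i\<le>n. c i * g (n - i))^2) \<le> (suminf c)^2 * (\<Sum>k\<le>N. (g k)^2)"
proof -
  define C where "C = suminf c"
  have partial_le: "(\<Sum>i\<le>n. c i) \<le> C" for n
    unfolding C_def using sum_le_suminf[OF \<open>summable c\<close>, of "{..n}"] c_nonneg by auto
  have "C \<ge> 0" using partial_le[of 0] c_nonneg[of 0] by simp
  have cauchy_schwarz: "(\<Sum>i\<le>n. c i * g (n - i))^2 \<le> C * (\<Sum>i\<le>n. c i * (g (n - i))^2)" for n
  proof -
    have "(\<Sum>i\<le>n. c i * g (n - i))^2 = (\<Sum>i\<le>n. sqrt (c i) * (sqrt (c i) * g (n - i)))^2"
      using c_nonneg by (simp add: mult.assoc[symmetric])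
    also have "\<dots> \<le> (\<Sum>i\<le>n. (sqrt (c i))^2) * (\<Sum>i\<le>n. (sqrt (c i) * g (n - i))^2)"
      by (rule Cauchy_Schwarz_ineq_sum)
    also have "\<dots> = (\<Sum>i\<le>n. c i) * (\<Sum>i\<le>n. c i * (g (n - i))^2)"
      using c_nonneg by (simp add: power_mult_distrib)
    also have "\<dots> \<le> C * (\<Sum>i\<le>n. c i * (g (n - i))^2)"
      by (intro mult_right_mono partial_le sum_nonneg) (auto simp: c_nonneg)
    finally show ?thesis .
  qed
  have "(\<Sum>n\<le>N. (\<Sum>i\<le>n. c i * g (n - i))^2) \<le> (\<Sum>n\<le>N. C * (\<Sum>i\<le>n. c i * (g (n - i))^2))"
    by (intro sum_mono cauchy_schwarz)
  also have "\<dots> = C * (\<Sum>n\<le>N. \<Sum>i\<le>N. if i \<le> n then c i * (g (n - i))^2 else 0)"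
  proof -
    have "(\<Sum>i\<le>n. c i * (g (n - i))^2) = (\<Sum>i\<le>N. if i \<le> n then c i * (g (n - i))^2 else 0)"
      if "n \<le> N" for n using that by (intro sum.mono_neutral_cong_left) auto
    then show ?thesis by (simp add: sum_distrib_left[symmetric])
  qed
  also have "\<dots> = C * (\<Sum>i\<le>N. c i * (\<Sum>n\<le>N. if i \<le> n then (g (n - i))^2 else 0))"
    by (subst sum.swap) (simp add: sum_distrib_left if_distrib cong: if_cong)
  also have "\<dots> \<le> C * (\<Sum>i\<le>N. c i * (\<Sum>k\<le>N. (g k)^2))"
    by (intro mult_left_mono sum_mono sum_shifted_le \<open>C \<ge> 0\<close> c_nonneg) auto
  also have "\<dots> = C * ((\<Sum>i\<le>N. c i) * (\<Sum>k\<le>N. (g k)^2))"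
    by (simp add: sum_distrib_right)
  also have "\<dots> \<le> C * (C * (\<Sum>k\<le>N. (g k)^2))"
    by (intro mult_left_mono mult_right_mono partial_le \<open>C \<ge> 0\<close> sum_nonneg) auto
  finally show ?thesis by (simp add: C_def power2_eq_square mult.assoc)
qed

text \<open>\<open>ar_poly a p\<close> is \<open>A(z)\<close>, and \<open>ar_residual a p y\<close> is the filtered sequence \<open>A(z) y\<close>,
  with \<open>y\<^sub>k = 0\<close> for \<open>k < 0\<close>.\<close>

definition ar_poly :: "(nat \<Rightarrow> real) \<Rightarrow> nat \<Rightarrow> complex poly" where
  "ar_poly a p = 1 + (\<Sum>j = 1..p. monom (complex_of_real (a j)) j)"

definition ar_residual :: "(nat \<Rightarrow> real) \<Rightarrow> nat \<Rightarrow> (nat \<Rightarrow> real) \<Rightarrow> nat \<Rightarrow> real" where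
  "ar_residual a p y n = y n + (\<Sum>j = 1..p. a j * (if j \<le> n then y (n - j) else 0))"

lemma poly_ar_poly: "poly (ar_poly a p) z = 1 + (\<Sum>j = 1..p. of_real (a j) * z ^ j)"
  unfolding ar_poly_def by (simp add: poly_sum poly_monom)

lemma coeff_ar_poly:
  "coeff (ar_poly a p) i = (if i = 0 then 1 else if i \<le> p then complex_of_real (a i) else 0)"
  unfolding ar_poly_def by (auto simp: coeff_sum coeff_monom sum.delta)

lemma fps_nth_ar_poly_mult:
  "fps_nth (fps_of_poly (ar_poly a p) * Abs_fps (\<lambda>n. complex_of_real (y n))) n
     = complex_of_real (ar_residual a p y n)"
proof -
  have "fps_nth (fps_of_poly (ar_poly a p) * Abs_fps (\<lambda>n. complex_of_real (y n))) n
      = complex_of_real (y n) + (\<Sum>i = 1..n. coeff (ar_poly a p) i * complex_of_real (y (n - i)))"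
    by (simp add: fps_mult_nth sum.atLeast_Suc_atMost coeff_ar_poly)
  also have "(\<Sum>i = 1..n. coeff (ar_poly a p) i * complex_of_real (y (n - i)))
      = (\<Sum>i \<in> {1..min n p}. complex_of_real (a i * y (n - i)))"
    by (rule sum.mono_neutral_cong_right) (auto simp: coeff_ar_poly)
  also have "\<dots> = (\<Sum>j = 1..p. complex_of_real (a j * (if j \<le> n then y (n - j) else 0)))"
    by (rule sum.mono_neutral_cong_left) auto
  finally show ?thesis by (simp add: ar_residual_def)
qed

text \<open>Inverting the filter: \<open>y = A(z)\<^sup>-\<^sup>1 (A(z) y)\<close> as formal power series.\<close>

lemma abs_le_inverse_ar_poly_convolution:
  "\<bar>y n\<bar> \<le> (\<Sum>i\<le>n. norm (fps_nth (inverse (fps_of_poly (ar_poly a p))) i) * \<bar>ar_residual a p y (n - i)\<bar>)"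
proof -
  define F where "F = fps_of_poly (ar_poly a p)"
  define Y where "Y = Abs_fps (\<lambda>n. complex_of_real (y n))"
  have "fps_nth F 0 = 1" unfolding F_def by (simp add: coeff_ar_poly)
  then have "Y = inverse F * (F * Y)"
    using inverse_mult_eq_1[of F] by (simp add: mult.assoc[symmetric])
  have "complex_of_real (y n) = fps_nth (inverse F * (F * Y)) n"
    by (subst \<open>Y = inverse F * (F * Y)\<close>[symmetric]) (simp add: Y_def)
  also have "\<dots> = (\<Sum>i = 0..n. fps_nth (inverse F) i * complex_of_real (ar_residual a p y (n - i)))"
    by (subst fps_mult_nth) (simp only: F_def Y_def fps_nth_ar_poly_mult)
  finally have "\<bar>y n\<bar> = norm (\<Sum>i = 0..n. fps_nth (inverse F) i * complex_of_real (ar_residual a p y (n - i)))"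
    by (metis norm_of_real)
  also have "\<dots> \<le> (\<Sum>i = 0..n. norm (fps_nth (inverse F) i * complex_of_real (ar_residual a p y (n - i))))"
    by (rule norm_sum)
  finally show ?thesis by (simp add: F_def norm_mult atLeast0AtMost)
qed

lemma ar_residual_energy_bound:
  assumes stable: "\<And>z. norm z \<le> 1 \<Longrightarrow> poly (ar_poly a p) z \<noteq> 0"
  shows "\<exists>H\<ge>0. \<forall>y N. (\<Sum>n\<le>N. (y n)^2) \<le> H * (\<Sum>n\<le>N. (ar_residual a p y n)^2)"
proof -
  define c where "c i = norm (fps_nth (inverse (fps_of_poly (ar_poly a p))) i)" for i
  have "summable c"
    unfolding c_def by (rule summable_norm_fps_inverse_poly[OF stable])
  have "(\<Sum>n\<le>N. (y n)^2) \<le> (suminf c)^2 * (\<Sum>n\<le>N. (ar_residual a p y n)^2)" for y N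
  proof -
    have "(\<Sum>n\<le>N. (y n)^2) \<le> (\<Sum>n\<le>N. (\<Sum>i\<le>n. c i * \<bar>ar_residual a p y (n - i)\<bar>)^2)"
      using abs_le_inverse_ar_poly_convolution[of y _ a p, folded c_def]
      by (intro sum_mono) (metis abs_ge_zero power2_abs power_mono)
    also have "\<dots> \<le> (suminf c)^2 * (\<Sum>k\<le>N. \<bar>ar_residual a p y k\<bar>^2)"
      by (rule sum_square_convolution_le[OF _ \<open>summable c\<close>]) (auto simp: c_def)
    finally show ?thesis by simp
  qed
  then show ?thesis by (intro exI[of _ "(suminf c)^2"]) auto
qed

subsection \<open>Almost sure bounds on the inputs and the noise\<close>

lemma AE_abs_le_of_uniform_distr:
  fixes u :: "nat \<Rightarrow> 'w \<Rightarrow> real"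
  assumes "\<And>n. u n \<in> borel_measurable M"
    and "\<And>n. distr M lborel (u n) = uniform_measure lborel {-\<delta>..\<delta>}"
  shows "AE x in M. \<forall>n. \<bar>u n x\<bar> \<le> \<delta>"
proof -
  have "AE x in M. u n x \<in> {-\<delta>..\<delta>}" for n
  proof (rule AE_distrD[of "u n" M lborel])
    show "u n \<in> measurable M lborel" using assms(1)[of n] by simp
    show "AE x in distr M lborel (u n). x \<in> {- \<delta>..\<delta>}"
      unfolding assms(2) by (rule AE_uniform_measureI) auto
  qed
  then have "AE x in M. \<forall>n. u n x \<in> {-\<delta>..\<delta>}" by (simp add: AE_all_countable)
  then show ?thesis by eventually_elim (fastforce simp: abs_le_iff)
qed

lemma nn_integral_std_normal_exp_square_quarter:
  "(\<integral>\<^sup>+x. ennreal (std_normal_density x) * ennreal (exp (x^2/4)) \<partial>lborel) = ennreal (sqrt 2)"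
proof -
  have "std_normal_density x * exp (x^2/4) = sqrt 2 * normal_density 0 (sqrt 2) x" for x
  proof -
    have "exp (- (x\<^sup>2) / 2) * exp ((x\<^sup>2)/4) = exp (- (x\<^sup>2)/4)" by (simp flip: exp_add)
    then show ?thesis
      by (simp add: std_normal_density_def normal_density_def real_sqrt_mult field_simps)
  qed
  then have "(\<integral>\<^sup>+x. ennreal (std_normal_density x) * ennreal (exp (x^2/4)) \<partial>lborel)
      = (\<integral>\<^sup>+x. ennreal (sqrt 2) * ennreal (normal_density 0 (sqrt 2) x) \<partial>lborel)"
    by (intro nn_integral_cong) (simp add: ennreal_mult[symmetric])
  also have "\<dots> = ennreal (sqrt 2) * (\<integral>\<^sup>+x. ennreal (normal_density 0 (sqrt 2) x) \<partial>lborel)"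
    by (rule nn_integral_cmult) simp
  also have "(\<integral>\<^sup>+x. ennreal (normal_density 0 (sqrt 2) x) \<partial>lborel) = 1"
    by (subst nn_integral_eq_integral) auto
  finally show ?thesis by simp
qed

context prob_space
begin

lemma nn_integral_prod_exp_sq_std_normal:
  fixes w :: "nat \<Rightarrow> 'a \<Rightarrow> real"
  assumes w_dist: "\<And>n. distributed M lborel (w n) std_normal_density"
    and w_indep: "indep_vars (\<lambda>_. borel) w UNIV"
  shows "(\<integral>\<^sup>+x. (\<Prod>k<m. ennreal (exp ((w k x)^2/4))) \<partial>M) = ennreal (sqrt 2 ^ m)"
proof -
  have moment: "(\<integral>\<^sup>+x. ennreal (exp ((w k x)^2/4)) \<partial>M) = ennreal (sqrt 2)" for k
    unfolding nn_integral_std_normal_exp_square_quarter[symmetric]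
    by (rule distributed_nn_integral[OF w_dist, symmetric]) simp
  have "indep_vars (\<lambda>_. borel) (\<lambda>k x. ennreal (exp ((w k x)^2/4))) UNIV"
    by (rule indep_vars_compose2[OF w_indep]) simp
  then have "indep_vars (\<lambda>_. borel) (\<lambda>k x. ennreal (exp ((w k x)^2/4))) {..<m}"
    by (rule indep_vars_subset) simp
  then have "(\<integral>\<^sup>+x. (\<Prod>k<m. ennreal (exp ((w k x)^2/4))) \<partial>M)
      = (\<Prod>k<m. \<integral>\<^sup>+x. ennreal (exp ((w k x)^2/4)) \<partial>M)"
    by (intro indep_vars_nn_integral) auto
  also have "\<dots> = ennreal (sqrt 2 ^ m)"
    by (simp add: moment prod_ennreal ennreal_power)
  finally show ?thesis .
qed

text \<open>Chernoff bound: \<open>e\<^sup>m P(\<Sum>\<^sub>k\<^sub><\<^sub>m w\<^sub>k\<^sup>2 > 4m) \<le> E \<Prod>\<^sub>k\<^sub><\<^sub>m exp(w\<^sub>k\<^sup>2/4) = \<surd>2\<^sup>m\<close>.\<close>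

lemma prob_sum_sq_std_normal_gt:
  fixes w :: "nat \<Rightarrow> 'a \<Rightarrow> real"
  assumes w_dist: "\<And>n. distributed M lborel (w n) std_normal_density"
    and w_indep: "indep_vars (\<lambda>_. borel) w UNIV"
  shows "prob {x \<in> space M. 4 * real m < (\<Sum>k<m. (w k x)^2)} \<le> (sqrt 2 / exp 1)^m"
proof -
  have [measurable]: "w k \<in> borel_measurable M" for k
    using distributed_measurable[OF w_dist[of k]] by simp
  define B where "B = {x \<in> space M. 4 * real m < (\<Sum>k<m. (w k x)^2)}"
  have [measurable]: "B \<in> sets M" unfolding B_def by measurable
  have pointwise: "ennreal (exp (real m)) * indicator B x \<le> (\<Prod>k<m. ennreal (exp ((w k x)^2/4)))" for x
  proof (cases "x \<in> B")
    case True
    then have "real m < (\<Sum>k<m. (w k x)^2/4)" unfolding B_def by (simp add: sum_divide_distrib[symmetric])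
    then have "exp (real m) \<le> (\<Prod>k<m. exp ((w k x)^2/4))" by (simp add: exp_sum[symmetric])
    then show ?thesis using True by (simp add: prod_ennreal ennreal_leI)
  qed simp
  have "ennreal (exp (real m)) * emeasure M B = (\<integral>\<^sup>+x. ennreal (exp (real m)) * indicator B x \<partial>M)"
    by (simp add: nn_integral_cmult_indicator)
  also have "\<dots> \<le> (\<integral>\<^sup>+x. (\<Prod>k<m. ennreal (exp ((w k x)^2/4))) \<partial>M)"
    by (intro nn_integral_mono pointwise)
  also have "\<dots> = ennreal (sqrt 2 ^ m)"
    by (rule nn_integral_prod_exp_sq_std_normal[OF w_dist w_indep])
  finally have "exp (real m) * prob B \<le> sqrt 2 ^ m"
    by (simp add: emeasure_eq_measure ennreal_mult[symmetric] ennreal_le_iff)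
  then have "prob B \<le> sqrt 2 ^ m / exp (real m)" by (simp add: field_simps)
  also have "\<dots> = (sqrt 2 / exp 1)^m" by (simp add: power_divide exp_of_nat_mult[symmetric])
  finally show ?thesis unfolding B_def .
qed

lemma AE_eventually_sum_sq_std_normal_le:
  fixes w :: "nat \<Rightarrow> 'a \<Rightarrow> real"
  assumes w_dist: "\<And>n. distributed M lborel (w n) std_normal_density"
    and w_indep: "indep_vars (\<lambda>_. borel) w UNIV"
  shows "AE x in M. \<exists>N. \<forall>m\<ge>N. (\<Sum>k<m. (w k x)^2) \<le> 4 * real m"
proof -
  have [measurable]: "w k \<in> borel_measurable M" for k
    using distributed_measurable[OF w_dist[of k]] by simp
  define B where "B m = {x \<in> space M. 4 * real m < (\<Sum>k<m. (w k x)^2)}" for m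
  have B_sets: "B m \<in> sets M" for m unfolding B_def by measurable
  have "sqrt 2 < (2::real)" by (rule real_less_lsqrt) auto
  also have "2 \<le> exp (1::real)" using exp_ge_add_one_self[of 1] by simp
  finally have "summable (\<lambda>m. (sqrt 2 / exp 1)^m)" by simp
  then have "summable (\<lambda>m. measure M (B m))"
    by (rule summable_comparison_test[rotated])
      (use prob_sum_sq_std_normal_gt[OF w_dist w_indep] in \<open>auto simp: B_def\<close>)
  then have "AE x in M. eventually (\<lambda>m. x \<in> space M - B m) sequentially"
    using borel_cantelli_AE1[OF B_sets] by (simp add: emeasure_eq_measure)
  then show ?thesis
    by eventually_elim (auto simp: B_def eventually_sequentially not_less)
qed

end

subsection \<open>The largest eigenvalue of the information matrix\<close>

lemma finite_eigenvalues:
  fixes A :: "'a::field mat"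
  assumes "A \<in> carrier_mat n n"
  shows "finite {k. eigenvalue A k}"
proof -
  have "char_poly A \<noteq> 0" using degree_monic_char_poly[OF assms] by auto
  from poly_roots_finite[OF this] show ?thesis unfolding eigenvalue_root_char_poly[OF assms] .
qed

text \<open>The Rayleigh quotient of \<open>\<Sum>\<^sub>i f\<^sub>i f\<^sub>i\<^sup>T + I\<close> is at most \<open>1 + \<Sum>\<^sub>i |f\<^sub>i|\<^sup>2\<close> by Cauchy-Schwarz.\<close>

lemma eigenvalue_gram_plus_id_le:
  fixes f :: "nat \<Rightarrow> nat \<Rightarrow> real"
  assumes "eigenvalue (mat d d (\<lambda>(r, l). (\<Sum>i\<in>I. f i r * f i l) + (if r = l then 1 else 0))) k"
  shows "k \<le> 1 + (\<Sum>i\<in>I. \<Sum>m<d. (f i m)^2)"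
proof -
  define A where "A = mat d d (\<lambda>(r, l). (\<Sum>i\<in>I. f i r * f i l) + (if r = l then 1 else 0))"
  from assms obtain v where "eigenvector A v k" unfolding eigenvalue_def A_def by auto
  then have vd: "dim_vec v = d" and "v \<noteq> 0\<^sub>v d" and Av: "A *\<^sub>v v = k \<cdot>\<^sub>v v"
    unfolding eigenvector_def A_def by auto
  define x where "x r = vec_index v r" for r
  define S where "S = (\<Sum>r<d. (x r)^2)"
  obtain r0 where "r0 < d" "x r0 \<noteq> 0" using \<open>v \<noteq> 0\<^sub>v d\<close> vd unfolding x_def by (auto simp: vec_eq_iff)
  then have "S > 0" unfolding S_def by (intro sum_pos2[of _ r0]) auto
  define g where "g i = (\<Sum>l<d. f i l * x l)" for i
  have row: "k * x r = (\<Sum>i\<in>I. f i r * g i) + x r" if "r < d" for r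
  proof -
    have "k * x r = vec_index (A *\<^sub>v v) r" using Av that vd unfolding x_def by simp
    also have "\<dots> = (\<Sum>l<d. A $$ (r, l) * x l)"
      using that vd by (simp add: A_def scalar_prod_def x_def atLeast0LessThan)
    also have "\<dots> = (\<Sum>l<d. (\<Sum>i\<in>I. f i r * f i l * x l) + (if r = l then x l else 0))"
      using that by (intro sum.cong refl) (simp add: A_def distrib_right sum_distrib_right)
    also have "\<dots> = (\<Sum>l<d. \<Sum>i\<in>I. f i r * f i l * x l) + (\<Sum>l<d. if r = l then x l else 0)"
      by (rule sum.distrib)
    also have "\<dots> = (\<Sum>i\<in>I. f i r * g i) + x r"
      using that unfolding g_def by (simp add: sum.swap[of _ "{..<d}"] sum_distrib_left mult.assoc)
    finally show ?thesis .
  qed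
  have "k * S = (\<Sum>r<d. x r * (k * x r))"
    unfolding S_def sum_distrib_left by (simp add: power2_eq_square mult.left_commute)
  also have "\<dots> = (\<Sum>r<d. \<Sum>i\<in>I. x r * f i r * g i) + S"
    by (simp add: row S_def distrib_left sum.distrib sum_distrib_left power2_eq_square mult.assoc)
  also have "(\<Sum>r<d. \<Sum>i\<in>I. x r * f i r * g i) = (\<Sum>i\<in>I. (g i)^2)"
    unfolding g_def power2_eq_square sum_distrib_right sum.swap[of _ "{..<d}"]
    by (intro sum.cong refl) (simp only: mult.commute mult.left_commute)
  also have "(\<Sum>i\<in>I. (g i)^2) \<le> (\<Sum>i\<in>I. (\<Sum>l<d. (f i l)^2) * S)"
    unfolding S_def g_def by (intro sum_mono Cauchy_Schwarz_ineq_sum)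
  finally have "k * S \<le> (1 + (\<Sum>i\<in>I. \<Sum>m<d. (f i m)^2)) * S"
    by (simp add: distrib_right sum_distrib_right)
  with \<open>S > 0\<close> show ?thesis by simp
qed

lemma sum_sq_psi_le:
  "(\<Sum>i = 0..n. \<Sum>m<p+q. (psi s u p q i m)^2)
     \<le> real p * (\<Sum>j\<le>n. (s j)^2) + real q * (\<Sum>j\<le>n. (u j)^2)"
proof -
  have lag_le: "(\<Sum>i\<le>n. if m < i then (f (i - m))^2 else 0) \<le> (\<Sum>j\<le>n. (f j)^2)" for f :: "nat \<Rightarrow> real" and m
  proof -
    have "(\<Sum>i\<le>n. if m < i then (f (i - m))^2 else 0) \<le> (\<Sum>i\<le>n. if m \<le> i then (f (i - m))^2 else 0)"
      by (intro sum_mono) auto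
    also have "\<dots> \<le> (\<Sum>j\<le>n. (f j)^2)"
      by (rule sum_shifted_le) simp
    finally show ?thesis .
  qed
  have split_lags: "(\<Sum>m<p+q. g m) = (\<Sum>m<p. g m) + (\<Sum>m<q. g (p + m))" for g :: "nat \<Rightarrow> real"
    by (induction q) (auto simp: add.assoc)
  have "(\<Sum>i = 0..n. \<Sum>m<p+q. (psi s u p q i m)^2)
      = (\<Sum>i\<le>n. (\<Sum>m<p. if m < i then (s (i - m))^2 else 0) + (\<Sum>m<q. if m < i then (u (i - m))^2 else 0))"
    unfolding split_lags atLeast0AtMost
    by (intro sum.cong refl arg_cong2[where f="(+)"]) (auto simp: psi_def)
  also have "\<dots> = (\<Sum>m<p. \<Sum>i\<le>n. if m < i then (s (i - m))^2 else 0) + (\<Sum>m<q. \<Sum>i\<le>n. if m < i then (u (i - m))^2 else 0)"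
    by (simp add: sum.distrib sum.swap[of _ "{..n}"])
  also have "\<dots> \<le> (\<Sum>m<p. \<Sum>j\<le>n. (s j)^2) + (\<Sum>m<q. \<Sum>j\<le>n. (u j)^2)"
    by (intro add_mono sum_mono lag_le)
  finally show ?thesis by simp
qed

text \<open>\<^const>\<open>lambda_max\<close> is a \<^const>\<open>Max\<close> over the real eigenvalues; the bound avoids having to show
  that this set is nonempty.\<close>

lemma lambda_max_info_mat_le:
  "lambda_max (info_mat s u p q n)
     \<le> max (1 + real p * (\<Sum>j\<le>n. (s j)^2) + real q * (\<Sum>j\<le>n. (u j)^2)) (Max {})"
proof -
  define S where "S = {k. eigenvalue (info_mat s u p q n) k}"
  have "k \<le> 1 + real p * (\<Sum>j\<le>n. (s j)^2) + real q * (\<Sum>j\<le>n. (u j)^2)" if "k \<in> S" for k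
    using eigenvalue_gram_plus_id_le[OF that[unfolded S_def mem_Collect_eq info_mat_def]]
      sum_sq_psi_le[where s=s and u=u and p=p and q=q and n=n] by linarith
  moreover have "finite S"
    unfolding S_def by (rule finite_eigenvalues[of _ "p + q"]) (simp add: info_mat_def)
  ultimately show ?thesis
    unfolding lambda_max_def S_def[symmetric] by (cases "S = {}") (simp_all add: le_max_iff_disj)
qed

subsection \<open>Pathwise energy bounds\<close>

lemma square_add_le: "(a + b)^2 \<le> 2 * a^2 + 2 * (b::real)^2"
proof -
  have "0 \<le> (a - b)^2" by simp
  then show ?thesis by (simp add: power2_eq_square algebra_simps)
qed

lemma abs_quant_sub_le:
  assumes "eps > 0"
  shows "\<bar>quant eps v - v\<bar> \<le> eps / 2"
proof -
  define t where "t = v / eps + 1/2"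
  have floor_t: "real_of_int \<lfloor>t\<rfloor> \<le> t" "t < real_of_int \<lfloor>t\<rfloor> + 1" by linarith+
  have "eps * real_of_int \<lfloor>t\<rfloor> \<le> eps * t" using floor_t(1) assms by (simp add: mult_left_mono)
  moreover have "eps * t < eps * (real_of_int \<lfloor>t\<rfloor> + 1)" by (rule mult_strict_left_mono[OF floor_t(2) assms])
  moreover have "eps * (real_of_int \<lfloor>t\<rfloor> + 1) = eps * real_of_int \<lfloor>t\<rfloor> + eps" by (simp add: distrib_left)
  moreover have "eps * t = v + eps / 2" unfolding t_def using assms by (simp add: distrib_left)
  ultimately show ?thesis unfolding quant_def t_def[symmetric] abs_le_iff by linarith
qed

lemma quant_sq_le:
  assumes "eps > 0"
  shows "(quant eps v)^2 \<le> 2 * v^2 + eps^2"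
proof -
  define d where "d = quant eps v - v"
  have "\<bar>d\<bar> \<le> eps / 2" unfolding d_def by (rule abs_quant_sub_le[OF assms])
  then have "d^2 \<le> (eps / 2)^2" by (metis abs_ge_zero power2_abs power_mono)
  moreover have "(eps / 2)^2 = eps^2 / 4" by (simp add: power_divide)
  moreover have "(quant eps v)^2 \<le> 2 * v^2 + 2 * d^2"
    using square_add_le[of v d] by (simp add: d_def)
  moreover have "eps^2 \<ge> 0" by simp
  ultimately show ?thesis by linarith
qed

context
  fixes a b u w y :: "nat \<Rightarrow> real" and p0 q0 :: nat and \<delta> :: real
  assumes arx: "\<And>n. y (Suc n) =
        - (\<Sum>j = 1..p0. a j * (if j \<le> n + 1 then y (n + 1 - j) else 0))
        + (\<Sum>j = 1..q0. b j * (if j \<le> n + 1 then u (n + 1 - j) else 0))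
        + w (Suc n)"
    and u_bounded: "\<And>n. \<bar>u n\<bar> \<le> \<delta>"
begin

lemma arx_residual_sq_le:
  "(ar_residual a p0 y n)^2
     \<le> (if n = 0 then (y 0)^2 else 0) + 2 * ((\<Sum>j = 1..q0. \<bar>b j\<bar>) * \<delta>)^2 + 2 * (w n)^2"
proof (cases n)
  case 0
  have "ar_residual a p0 y 0 = y 0"
    unfolding ar_residual_def by (intro add_cancel_left_right[THEN iffD2] sum.neutral) auto
  then show ?thesis using 0 by simp
next
  case (Suc m)
  define v where "v = (\<Sum>j = 1..q0. b j * (if j \<le> m + 1 then u (m + 1 - j) else 0))"
  have "\<delta> \<ge> 0" using u_bounded[of 0] by linarith
  have "\<bar>v\<bar> \<le> (\<Sum>j = 1..q0. \<bar>b j * (if j \<le> m + 1 then u (m + 1 - j) else 0)\<bar>)"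
    unfolding v_def by (rule sum_abs)
  also have "\<dots> \<le> (\<Sum>j = 1..q0. \<bar>b j\<bar> * \<delta>)"
    using \<open>\<delta> \<ge> 0\<close> by (intro sum_mono) (auto simp: abs_mult u_bounded intro: mult_left_mono)
  finally have "v^2 \<le> ((\<Sum>j = 1..q0. \<bar>b j\<bar>) * \<delta>)^2"
    by (metis abs_ge_zero power2_abs power_mono sum_distrib_right)
  moreover have "ar_residual a p0 y n = v + w n"
    using arx[of m] unfolding ar_residual_def v_def Suc Suc_eq_plus1 by linarith
  ultimately show ?thesis
    using square_add_le[of v "w n"] Suc by simp
qed

lemma sum_sq_arx_output_le:
  assumes energy: "\<And>N. (\<Sum>n\<le>N. (y n)^2) \<le> H * (\<Sum>n\<le>N. (ar_residual a p0 y n)^2)"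
    and "H \<ge> 0"
    and w_energy: "(\<Sum>k<N+1. (w k)^2) \<le> 4 * real (N+1)"
  shows "(\<Sum>n\<le>N. (y n)^2) \<le> H * ((y 0)^2 + (real N + 1) * (2 * ((\<Sum>j = 1..q0. \<bar>b j\<bar>) * \<delta>)^2 + 8))"
proof -
  define K where "K = 2 * ((\<Sum>j = 1..q0. \<bar>b j\<bar>) * \<delta>)^2"
  have "(\<Sum>n\<le>N. (ar_residual a p0 y n)^2) \<le> (\<Sum>n\<le>N. (if n = 0 then (y 0)^2 else 0) + K + 2 * (w n)^2)"
    unfolding K_def by (intro sum_mono arx_residual_sq_le)
  also have "\<dots> = (y 0)^2 + real (N+1) * K + 2 * (\<Sum>k<N+1. (w k)^2)"
    by (simp add: sum.distrib sum_distrib_left lessThan_Suc_atMost)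
  also have "\<dots> \<le> (y 0)^2 + (real N + 1) * (K + 8)"
    using w_energy by (simp add: algebra_simps)
  finally show ?thesis
    using energy[of N] \<open>H \<ge> 0\<close> unfolding K_def by (meson mult_left_mono order_trans)
qed

lemma lambda_max_quantized_arx_le:
  assumes energy: "\<And>N. (\<Sum>n\<le>N. (y n)^2) \<le> H * (\<Sum>n\<le>N. (ar_residual a p0 y n)^2)"
    and "H \<ge> 0" and "eps > 0"
    and w_energy: "(\<Sum>k<n+1. (w k)^2) \<le> 4 * real (n+1)"
  defines "K \<equiv> 2 * ((\<Sum>j = 1..q0. \<bar>b j\<bar>) * \<delta>)^2 + 8"
  shows "lambda_max (info_mat (\<lambda>i. quant eps (y i)) u pstar q0 n)
      \<le> max (1 + 2 * real pstar * H * (y 0)^2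
               + (real pstar * (2 * H * K + eps^2) + real q0 * \<delta>^2) * (real n + 1)) (Max {})"
proof -
  have "(\<Sum>j\<le>n. (quant eps (y j))^2) \<le> (\<Sum>j\<le>n. 2 * (y j)^2 + eps^2)"
    by (intro sum_mono quant_sq_le \<open>eps > 0\<close>)
  also have "\<dots> = 2 * (\<Sum>j\<le>n. (y j)^2) + (real n + 1) * eps^2"
    by (simp add: sum.distrib sum_distrib_left)
  also have "\<dots> \<le> 2 * (H * ((y 0)^2 + (real n + 1) * K)) + (real n + 1) * eps^2"
    using sum_sq_arx_output_le[OF energy \<open>H \<ge> 0\<close> w_energy] unfolding K_def by simp
  finally have s_energy: "real pstar * (\<Sum>j\<le>n. (quant eps (y j))^2)
      \<le> real pstar * (2 * H * (y 0)^2 + (2 * H * K + eps^2) * (real n + 1))"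
    by (intro mult_left_mono) (simp_all add: algebra_simps)
  have "(\<Sum>j\<le>n. (u j)^2) \<le> (\<Sum>j\<le>n. \<delta>^2)"
    by (intro sum_mono) (metis abs_ge_zero power2_abs power_mono u_bounded)
  then have u_energy: "real q0 * (\<Sum>j\<le>n. (u j)^2) \<le> real q0 * (\<delta>^2 * (real n + 1))"
    by (intro mult_left_mono) (auto simp: algebra_simps)
  have "real pstar * (2 * H * (y 0)^2 + (2 * H * K + eps^2) * (real n + 1)) + real q0 * (\<delta>^2 * (real n + 1))
      = 2 * real pstar * H * (y 0)^2 + (real pstar * (2 * H * K + eps^2) + real q0 * \<delta>^2) * (real n + 1)"
    by (simp add: algebra_simps)
  with s_energy u_energy
  have "1 + real pstar * (\<Sum>j\<le>n. (quant eps (y j))^2) + real q0 * (\<Sum>j\<le>n. (u j)^2)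
      \<le> 1 + 2 * real pstar * H * (y 0)^2 + (real pstar * (2 * H * K + eps^2) + real q0 * \<delta>^2) * (real n + 1)"
    by linarith
  then show ?thesis
    using lambda_max_info_mat_le[of "\<lambda>i. quant eps (y i)" u pstar q0 n]
    by (meson max.mono order_refl order_trans)
qed

end

lemma eventually_le_linear_of_le_max:
  fixes f :: "nat \<Rightarrow> real"
  assumes "C \<ge> 0" and bound: "\<And>n. n \<ge> N \<Longrightarrow> f n \<le> max (T + C * (real n + 1)) D"
  shows "\<exists>N'. \<forall>n\<ge>N'. f n \<le> (C + 1) * (real n + 1)"
proof -
  obtain N2 :: nat where N2: "real N2 \<ge> \<bar>T\<bar> + \<bar>D\<bar>" by (meson real_arch_simple)
  have "f n \<le> (C + 1) * (real n + 1)" if "n \<ge> N + N2" for n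
  proof -
    have "real n + 1 \<ge> \<bar>T\<bar> + \<bar>D\<bar>" using that N2 by linarith
    moreover have "C * (real n + 1) \<ge> 0" using \<open>C \<ge> 0\<close> by simp
    moreover have "(C + 1) * (real n + 1) = C * (real n + 1) + (real n + 1)" by (simp add: algebra_simps)
    ultimately have "T + C * (real n + 1) \<le> (C + 1) * (real n + 1)" "D \<le> (C + 1) * (real n + 1)"
      using abs_ge_self[of T] abs_ge_self[of D] by linarith+
    then show ?thesis using bound[of n] that by (meson max.boundedI order_trans le_add1 order.trans)
  qed
  then show ?thesis by blast
qed

theorem lemma5:
  fixes M :: "'w measure"
    and a b :: "nat \<Rightarrow> real" and p0 q0 pstar :: nat
    and eps \<delta> :: real
    and w u y :: "nat \<Rightarrow> 'w \<Rightarrow> real"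
  assumes "prob_space M"
    and q0: "q0 \<ge> 1" and bq0: "b q0 \<noteq> 0"
    and ap0: "p0 > 0 \<Longrightarrow> a p0 \<noteq> 0"
    and pstar: "pstar > 0" "p0 \<le> pstar"
    and eps: "eps > 0"
    and sys: "\<And>n x. y (Suc n) x =
        - (\<Sum>j = 1..p0. a j * (if j \<le> n + 1 then y (n + 1 - j) x else 0))
        + (\<Sum>j = 1..q0. b j * (if j \<le> n + 1 then u (n + 1 - j) x else 0))
        + w (Suc n) x"
    and w_dist: "\<And>n. distributed M lborel (w n) std_normal_density"
    and w_indep: "prob_space.indep_vars M (\<lambda>_. borel) w UNIV"
    and A1_pos: "\<delta> > 0"
    and A1_meas: "\<And>n. u n \<in> borel_measurable M"
    and A1_dist: "\<And>n. distr M lborel (u n) = uniform_measure lborel {-\<delta>..\<delta>}"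
    and A1_indep: "prob_space.indep_vars M (\<lambda>_. borel) u UNIV"
    and A2: "\<And>z::complex. cmod z \<le> 1 \<Longrightarrow> 1 + (\<Sum>j = 1..p0. of_real (a j) * z ^ j) \<noteq> 0"
  shows "\<exists>c4 > 0. AE x in M. \<exists>N. \<forall>n \<ge> N.
           lambda_max (info_mat (\<lambda>i. quant eps (y i x)) (\<lambda>i. u i x) pstar q0 n)
             \<le> c4 * (real n + 1)"
proof -
  \<comment> \<open>Only the recursion, (A2), the law of the inputs and the noise assumptions are used.\<close>
  interpret prob_space M by fact
  have "\<And>z. norm z \<le> 1 \<Longrightarrow> poly (ar_poly a p0) z \<noteq> 0"
    using A2 by (simp add: poly_ar_poly)
  then obtain H where "H \<ge> 0" and energy: "\<And>y N. (\<Sum>n\<le>N. (y n)^2) \<le> H * (\<Sum>n\<le>N. (ar_residual a p0 y n)^2)"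
    using ar_residual_energy_bound by blast
  define K where "K = 2 * ((\<Sum>j = 1..q0. \<bar>b j\<bar>) * \<delta>)^2 + 8"
  define C where "C = real pstar * (2 * H * K + eps^2) + real q0 * \<delta>^2"
  have "C \<ge> 0" unfolding C_def K_def using \<open>H \<ge> 0\<close> by simp
  have "AE x in M. \<exists>N. \<forall>n \<ge> N.
      lambda_max (info_mat (\<lambda>i. quant eps (y i x)) (\<lambda>i. u i x) pstar q0 n) \<le> (C + 1) * (real n + 1)"
    using AE_abs_le_of_uniform_distr[of u M \<delta>, OF A1_meas A1_dist]
      AE_eventually_sum_sq_std_normal_le[of w, OF w_dist w_indep]
  proof eventually_elim
    case (elim x)
    then obtain N where w_energy: "\<And>m. m \<ge> N \<Longrightarrow> (\<Sum>k<m. (w k x)^2) \<le> 4 * real m" by blast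
    have "lambda_max (info_mat (\<lambda>i. quant eps (y i x)) (\<lambda>i. u i x) pstar q0 n)
        \<le> max (1 + 2 * real pstar * H * (y 0 x)^2 + C * (real n + 1)) (Max {})" if "n \<ge> N" for n
      unfolding C_def K_def
      by (rule lambda_max_quantized_arx_le[where y="\<lambda>n. y n x" and u="\<lambda>n. u n x" and w="\<lambda>n. w n x",
            OF sys _ energy \<open>H \<ge> 0\<close> eps]) (use elim w_energy[of "n + 1"] that in auto)
    then show ?case by (rule eventually_le_linear_of_le_max[OF \<open>C \<ge> 0\<close>])
  qed
  moreover have "C + 1 > 0" using \<open>C \<ge> 0\<close> by simp
  ultimately show ?thesis by blast
qed

end
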